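(* Let $\mathbf k=(k_1,\ldots,k_r)\in\mathbb N^r$, $\mathbf m=(m_1,\ldots,m_p)\in\mathbb N^p$ with $m_p\ge2$, $\boldsymbol\eta\in\{\pm1\}^r$, $\boldsymbol\varepsilon\in\{\pm1\}^p$, and $\underline\eta=\eta_1\cdots\eta_r$. Then \[ M\big(m_p,\ldots,m_1,k_1+1,k_2,\ldots,k_r;\underline\eta\,\mathbf q(\boldsymbol\varepsilon),\mathbf p(\boldsymbol\eta)\big) =\sum_{j=1}^p(-1)^{j-1}M\big(m_p,\ldots,m_j;\mathbf q(\varepsilon_{j+1},\ldots,\varepsilon_p),1\big)\,M\Big(\big(\mathbf k;\mathbf p(\boldsymbol\eta)\big)\circledast\big(1,m_1,\ldots,m_{j-1};\mathbf p(\varepsilon_1,\ldots,\varepsilon_j)\big)^\star\Big) \] \[ +\sum_{j=1}^p(-1)^{j-1}M\big(m_p,\ldots,m_j;-\mathbf q(\varepsilon_{j+1},\ldots,\varepsilon_p),-1\big)\,M\Big(\big(\mathbf k;\mathbf p(\boldsymbol\eta)\big)\circledast\big(1,m_1,\ldots,m_{j-1};-\mathbf p(\varepsilon_1,\ldots,\varepsilon_j)\big)^\star\Big) +2(-1)^pM\Big(\big(\mathbf k;\mathbf p(\boldsymbol\eta)\big)\circledast\big(1,\mathbf m;0,\underline\eta\,\mathbf r(\boldsymbol\varepsilon)\big)^\star\Big), \] where for $j=p$ the sign vectors $(\pm\mathbf q(\emptyset),\pm1)$ are just $(\pm1)$.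
   Context: For $\boldsymbol\varepsilon=(\varepsilon_1,\ldots,\varepsilon_r)\in\{\pm1\}^r$: $\mathbf p(\boldsymbol\varepsilon)=(\varepsilon_1\cdots\varepsilon_r,\varepsilon_2\cdots\varepsilon_r,\ldots,\varepsilon_r)$, $\mathbf q(\boldsymbol\varepsilon)=(\varepsilon_1\cdots\varepsilon_r,\ldots,\varepsilon_1\varepsilon_2,\varepsilon_1)$, $\mathbf r(\boldsymbol\varepsilon)=(\varepsilon_1,\varepsilon_1\varepsilon_2,\ldots,\varepsilon_1\cdots\varepsilon_r)$; $a\boldsymbol\varepsilon$ is componentwise. Multiple mixed value: $M(\mathbf k;\boldsymbol\varepsilon)=\sum_{n_1>\cdots>n_r>0}\prod_j(1+\varepsilon_j(-1)^{n_j})/n_j^{k_j}$ ($k_1\ge2$). $M_n$, $M^\star_n$ are the truncations to $n\ge n_1>\cdots$ resp. $n\ge n_1\ge\cdots\ge n_r\ge1$ (empty $=1$). Convoluted MMV: $M((\mathbf k;\boldsymbol\eta)\circledast(\mathbf l;\boldsymbol\varepsilon)^\star)=\sum_{n\ge1}\frac{M_{n-1}(k_2,\ldots,k_r;\eta_2,\ldots,\eta_r)M^\star_n(l_2,\ldots,l_s;\varepsilon_2,\ldots,\varepsilon_s)}{n^{k_1+l_1}}\cdot\frac{(1+\varepsilon_1(-1)^n)(1+\eta_1(-1)^n)}{2}$, for $\eta_1,\varepsilon_1\in\{\pm1,0\}$ not both $0$ and all other signs in $\{\pm1\}$. *)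

theory Defs
  imports Complex_Main
begin

text \<open>Sign vectors are lists of reals (entries in {-1,1}, or 0 where allowed).
  Lists are 0-indexed: the paper's index i corresponds to list position i-1.\<close>

definition pvec :: "real list \<Rightarrow> real list" where
  "pvec es = map (\<lambda>i. prod_list (drop i es)) [0..<length es]"

definition rvec :: "real list \<Rightarrow> real list" where
  "rvec es = map (\<lambda>i. prod_list (take (Suc i) es)) [0..<length es]"

definition qvec :: "real list \<Rightarrow> real list" where
  "qvec es = rev (rvec es)"

fun Mtr :: "nat \<Rightarrow> nat list \<Rightarrow> real list \<Rightarrow> real" where
  "Mtr n (k # ks) (e # es) =
     (\<Sum>m\<in>{1..n}. (1 + e * (-1) ^ m) / real m ^ k * Mtr (m - 1) ks es)"
| "Mtr n _ _ = 1"

fun Mst :: "nat \<Rightarrow> nat list \<Rightarrow> real list \<Rightarrow> real" where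
  "Mst n (k # ks) (e # es) =
     (\<Sum>m\<in>{1..n}. (1 + e * (-1) ^ m) / real m ^ k * Mst m ks es)"
| "Mst n _ _ = 1"

text \<open>Multiple mixed value: limit of the (monotone, nonnegative) truncations.\<close>
definition MMV :: "nat list \<Rightarrow> real list \<Rightarrow> real" where
  "MMV ks es = lim (\<lambda>n. Mtr n ks es)"

definition CMMV :: "nat list \<Rightarrow> real list \<Rightarrow> nat list \<Rightarrow> real list \<Rightarrow> real" where
  "CMMV ks es ls fs =
     (\<Sum>i. let n = Suc i in
        Mtr (n - 1) (tl ks) (tl es) * Mst n (tl ls) (tl fs) / real n ^ (hd ks + hd ls)
        * ((1 + hd fs * (-1) ^ n) * (1 + hd es * (-1) ^ n) / 2))"

end

theory Submission
  imports Defs "HOL-Analysis.Summation_Tests"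
begin

(* Split the left-hand side at the index b carrying the exponent k_1 + 1. For fixed b, the
   condition that the p larger indices exceed b is removed by inclusion-exclusion, which yields
   the products (-1)^(j-1) M_N(m_p,...,m_j) M*_b(m_1,...,m_(j-1)). The sign vectors of the two factors
   are q(eps_(j+1),...,eps_p) and p(eps_1,...,eps_j) multiplied by one common sign
   c_j = eta_1...eta_r eps_1...eps_j, and the weight 1 + eta_1...eta_r (-1)^b distributes over
   the two possible values of c_j. Summing over b gives the identity for the truncations at N,
   and all truncations converge because they are nonnegative and grow at most like N^(1/4). *)

fun Mtr_gt :: "nat \<Rightarrow> nat \<Rightarrow> nat list \<Rightarrow> real list \<Rightarrow> real" where
  "Mtr_gt N c (k # ks) (e # es) =
     (\<Sum>a\<in>{c<..N}. (1 + e * (-1) ^ a) / real a ^ k * Mtr_gt (a - 1) c ks es)"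
| "Mtr_gt N c _ _ = 1"

lemma Mtr_eq_Mtr_gt: "Mtr n ks es = Mtr_gt n 0 ks es"
  by (induction n ks es rule: Mtr.induct)
     (simp_all add: atLeastSucAtMost_greaterThanAtMost[of 0, simplified])

lemma sum_triangle_swap:
  fixes F :: "nat \<Rightarrow> nat \<Rightarrow> 'a::comm_monoid_add"
  shows "(\<Sum>a\<in>{c<..N}. \<Sum>b\<in>{c<..a-1}. F a b) = (\<Sum>b\<in>{c<..N}. \<Sum>a\<in>{b<..N}. F a b)"
proof -
  have inner: "(\<Sum>b\<in>{c<..a-1}. F a b) = (\<Sum>b\<in>{c<..N}. if b < a then F a b else 0)"
    if "a \<le> N" for a
  proof -
    have "{c<..a-1} = {b\<in>{c<..N}. b < a}" using that by auto
    then show ?thesis by (simp only:) (rule sum.inter_filter, simp)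
  qed
  have outer: "(\<Sum>a\<in>{b<..N}. F a b) = (\<Sum>a\<in>{c<..N}. if b < a then F a b else 0)"
    if "c < b" for b
  proof -
    have "{b<..N} = {a\<in>{c<..N}. b < a}" using that by auto
    then show ?thesis by (simp only:) (rule sum.inter_filter, simp)
  qed
  have "(\<Sum>a\<in>{c<..N}. \<Sum>b\<in>{c<..a-1}. F a b) = (\<Sum>a\<in>{c<..N}. \<Sum>b\<in>{c<..N}. if b < a then F a b else 0)"
    using inner by (intro sum.cong[OF refl]) simp
  also have "\<dots> = (\<Sum>b\<in>{c<..N}. \<Sum>a\<in>{c<..N}. if b < a then F a b else 0)"
    by (rule sum.swap)
  also have "\<dots> = (\<Sum>b\<in>{c<..N}. \<Sum>a\<in>{b<..N}. F a b)"
    using outer by (intro sum.cong[OF refl]) simp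
  finally show ?thesis .
qed

lemma Mtr_gt_append:
  assumes "length xs = length es"
  shows "Mtr_gt N c (xs @ y # ys) (es @ f # fs) =
    (\<Sum>b\<in>{c<..N}. (1 + f * (-1) ^ b) / real b ^ y * Mtr_gt (b - 1) c ys fs * Mtr_gt N b xs es)"
  using assms
proof (induction xs es arbitrary: N rule: list_induct2)
  case Nil
  then show ?case by simp
next
  case (Cons x xs e es)
  let ?w = "\<lambda>e k a. (1 + e * (-1) ^ a) / real a ^ k"
  have "Mtr_gt N c ((x # xs) @ y # ys) ((e # es) @ f # fs) =
     (\<Sum>a\<in>{c<..N}. \<Sum>b\<in>{c<..a-1}. ?w f y b * Mtr_gt (b - 1) c ys fs * (?w e x a * Mtr_gt (a-1) b xs es))"
    using Cons.IH by (simp add: sum_distrib_left mult_ac)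
  also have "\<dots> = (\<Sum>b\<in>{c<..N}. \<Sum>a\<in>{b<..N}. ?w f y b * Mtr_gt (b - 1) c ys fs * (?w e x a * Mtr_gt (a-1) b xs es))"
    by (rule sum_triangle_swap)
  also have "\<dots> = (\<Sum>b\<in>{c<..N}. ?w f y b * Mtr_gt (b - 1) c ys fs * Mtr_gt N b (x#xs) (e#es))"
    by (simp add: sum_distrib_left)
  finally show ?case .
qed

lemma Mtr_gt_snoc:
  assumes "length xs = length es"
  shows "Mtr_gt N c (xs @ [y]) (es @ [f]) =
    (\<Sum>b\<in>{c<..N}. (1 + f * (-1) ^ b) / real b ^ y * Mtr_gt N b xs es)"
  using Mtr_gt_append[OF assms, of N c y "[]" f "[]"] by simp

text \<open>The sum over \<open>n\<^sub>p > b\<close> is the full sum minus the sum over \<open>n\<^sub>p \<le> b\<close>; recursing on the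
  second term turns the lower bound into an alternating sum of products of truncations.\<close>

lemma Mtr_gt_rev_expand:
  assumes "length ms = length ss" "b \<le> N"
  shows "Mtr_gt N b (rev ms) (rev ss) =
    (\<Sum>j<length ms. (-1) ^ j * Mtr N (rev (drop j ms)) (rev (drop j ss)) * Mst b (take j ms) (take j ss))
    + (-1) ^ length ms * Mst b ms ss"
  using assms
proof (induction ms ss arbitrary: b rule: list_induct2)
  case Nil
  then show ?case by simp
next
  case (Cons m1 ms s1 ss)
  let ?w = "\<lambda>a. (1 + s1 * (-1) ^ a) / real a ^ m1"
  let ?X = "\<lambda>j. (-1) ^ j * Mtr N (rev (drop j ms)) (rev (drop j ss))"
  let ?R = "\<lambda>a. (\<Sum>j<length ms. ?X j * Mst a (take j ms) (take j ss)) + (-1) ^ length ms * Mst a ms ss"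
  have len: "length (rev ms) = length (rev ss)" using Cons.hyps by simp
  have "Mtr_gt N b (rev (m1#ms)) (rev (s1#ss)) = (\<Sum>a\<in>{b<..N}. ?w a * Mtr_gt N a (rev ms) (rev ss))"
    using Mtr_gt_snoc[OF len] by simp
  also have "\<dots> = (\<Sum>a\<in>{0<..N}. ?w a * Mtr_gt N a (rev ms) (rev ss)) - (\<Sum>a\<in>{0<..b}. ?w a * ?R a)"
  proof -
    have split: "{b<..N} = {0<..N} - {0<..b}" using Cons.prems by auto
    have "(\<Sum>a\<in>{b<..N}. ?w a * Mtr_gt N a (rev ms) (rev ss)) =
        (\<Sum>a\<in>{0<..N}. ?w a * Mtr_gt N a (rev ms) (rev ss)) - (\<Sum>a\<in>{0<..b}. ?w a * Mtr_gt N a (rev ms) (rev ss))"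
      unfolding split using Cons.prems by (intro sum_diff) auto
    moreover have "(\<Sum>a\<in>{0<..b}. ?w a * Mtr_gt N a (rev ms) (rev ss)) = (\<Sum>a\<in>{0<..b}. ?w a * ?R a)"
      using Cons.IH Cons.prems by (intro sum.cong refl) auto
    ultimately show ?thesis by simp
  qed
  also have "(\<Sum>a\<in>{0<..N}. ?w a * Mtr_gt N a (rev ms) (rev ss)) = Mtr N (rev (m1#ms)) (rev (s1#ss))"
    using Mtr_gt_snoc[OF len] by (simp add: Mtr_eq_Mtr_gt)
  also have "(\<Sum>a\<in>{0<..b}. ?w a * ?R a) =
      (\<Sum>j<length ms. ?X j * (\<Sum>a\<in>{0<..b}. ?w a * Mst a (take j ms) (take j ss)))
    + (-1) ^ length ms * (\<Sum>a\<in>{0<..b}. ?w a * Mst a ms ss)"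
  proof -
    have "(\<Sum>a\<in>{0<..b}. ?w a * ?R a) =
        (\<Sum>a\<in>{0<..b}. \<Sum>j<length ms. ?X j * (?w a * Mst a (take j ms) (take j ss)))
      + (-1) ^ length ms * (\<Sum>a\<in>{0<..b}. ?w a * Mst a ms ss)"
      by (simp add: sum.distrib sum_distrib_left algebra_simps)
    then show ?thesis
      by (simp add: sum.swap[of _ "{0<..b}"] sum_distrib_left)
  qed
  also have "\<dots> = (\<Sum>j<length ms. ?X j * Mst b (take (Suc j) (m1#ms)) (take (Suc j) (s1#ss)))
    + (-1) ^ length ms * Mst b (m1#ms) (s1#ss)"
    by (simp add: atLeastSucAtMost_greaterThanAtMost[of 0, simplified])
  finally show ?case
    by (simp del: sum.lessThan_Suc add: sum.lessThan_Suc_shift sum_negf)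
qed

lemma Mtr_append_expand:
  assumes "length ms = length ss"
  shows "Mtr N (rev ms @ l # ls) (rev ss @ f # fs) =
    (\<Sum>b\<in>{1..N}. (1 + f * (-1) ^ b) / real b ^ l * Mtr (b - 1) ls fs *
       ((\<Sum>j<length ms. (-1) ^ j * Mtr N (rev (drop j ms)) (rev (drop j ss)) * Mst b (take j ms) (take j ss))
        + (-1) ^ length ms * Mst b ms ss))"
proof -
  have "Mtr N (rev ms @ l # ls) (rev ss @ f # fs) =
      (\<Sum>b\<in>{0<..N}. (1 + f * (-1) ^ b) / real b ^ l * Mtr (b - 1) ls fs * Mtr_gt N b (rev ms) (rev ss))"
    unfolding Mtr_eq_Mtr_gt using assms by (intro Mtr_gt_append) simp
  also have "{0<..N} = {1..N}" by auto
  finally show ?thesis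
    using assms by (simp add: Mtr_gt_rev_expand)
qed

lemma sign_weight_bounds:
  fixes e :: real
  assumes "\<bar>e\<bar> \<le> 1"
  shows "0 \<le> 1 + e * (-1) ^ a" "1 + e * (-1) ^ a \<le> 2"
  using assms by (cases "even a"; auto simp: abs_le_iff)+

lemma Mst_nonneg: "\<forall>e\<in>set es. \<bar>e\<bar> \<le> 1 \<Longrightarrow> 0 \<le> Mst n ks es"
proof (induction n ks es rule: Mst.induct)
  case (1 n k ks e es)
  then show ?case
    using sign_weight_bounds[of e] by (auto intro!: sum_nonneg mult_nonneg_nonneg divide_nonneg_nonneg)
qed auto

lemma Mtr_nonneg: "\<forall>e\<in>set es. \<bar>e\<bar> \<le> 1 \<Longrightarrow> 0 \<le> Mtr n ks es"
proof (induction n ks es rule: Mtr.induct)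
  case (1 n k ks e es)
  then show ?case
    using sign_weight_bounds[of e] by (auto intro!: sum_nonneg mult_nonneg_nonneg divide_nonneg_nonneg)
qed auto

lemma Mtr_pred_le_Mst:
  assumes "\<forall>e\<in>set es. \<bar>e\<bar> \<le> 1"
  shows "Mtr (n - 1) ks es \<le> Mst n ks es"
  using assms
proof (induction ks arbitrary: es n)
  case (Cons k ks)
  show ?case
  proof (cases es)
    case (Cons e es')
    let ?w = "\<lambda>a. (1 + e * (-1) ^ a) / real a ^ k"
    have w: "0 \<le> ?w a" for a
      using Cons.prems sign_weight_bounds[of e] \<open>es = e # es'\<close> by simp
    have "Mtr (n - 1) (k # ks) es = (\<Sum>a\<in>{1..n-1}. ?w a * Mtr (a - 1) ks es')"
      by (simp add: \<open>es = e # es'\<close>)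
    also have "\<dots> \<le> (\<Sum>a\<in>{1..n-1}. ?w a * Mst a ks es')"
      using Cons.IH[of es'] Cons.prems w \<open>es = e # es'\<close> by (intro sum_mono mult_left_mono) simp_all
    also have "\<dots> \<le> (\<Sum>a\<in>{1..n}. ?w a * Mst a ks es')"
      using Cons.prems w \<open>es = e # es'\<close> by (intro sum_mono2 mult_nonneg_nonneg Mst_nonneg) auto
    finally show ?thesis by (simp add: \<open>es = e # es'\<close>)
  qed simp
qed simp

text \<open>With \<open>x = (n+1)\<^sup>1\<^sup>/\<^sup>4\<close> and \<open>y = n\<^sup>1\<^sup>/\<^sup>4\<close> this is \<open>1 = x\<^sup>4 - y\<^sup>4 \<le> 4 x\<^sup>3 (x - y)\<close>.\<close>

lemma powr_quarter_increment:
  "real (Suc n) powr (1/4) / real (Suc n) \<le> 4 * (real (Suc n) powr (1/4) - real n powr (1/4))"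
proof -
  define x where "x = real (Suc n) powr (1/4)"
  define y where "y = real n powr (1/4)"
  have x4: "x ^ 4 = real n + 1"
    unfolding x_def by (simp add: powr_powr flip: powr_realpow)
  have y4: "y ^ 4 = real n"
    unfolding y_def by (cases "n = 0") (simp_all add: powr_powr flip: powr_realpow)
  have xp: "x > 0" and yp: "y \<ge> 0" unfolding x_def y_def by simp_all
  have yx: "y \<le> x"
    unfolding x_def y_def by (intro powr_mono2) auto
  have "1 = (x - y) * (x^3 + x^2*y + x*y^2 + y^3)"
    using x4 y4 by (simp add: algebra_simps power2_eq_square power3_eq_cube power4_eq_xxxx)
  also have "\<dots> \<le> (x - y) * (4 * x^3)"
  proof (rule mult_left_mono)
    have "x^2*y \<le> x^3" using yx xp yp by (simp add: power2_eq_square power3_eq_cube mult_left_mono)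
    moreover have "x*y^2 \<le> x^3" using yx xp yp by (simp add: power2_eq_square power3_eq_cube mult_mono mult_left_mono)
    moreover have "y^3 \<le> x^3" using yx yp by (intro power_mono) auto
    ultimately show "x^3 + x^2*y + x*y^2 + y^3 \<le> 4 * x^3" by simp
  qed (use yx in simp)
  finally have "1 \<le> 4 * (x - y) * x ^ 3" by (simp add: algebra_simps)
  then have "1 / x ^ 3 \<le> 4 * (x - y)"
    using xp by (simp add: divide_le_eq)
  moreover have "real (Suc n) powr (1/4) / real (Suc n) = x / x ^ 4"
    using x4 by (simp add: x_def)
  moreover have "x / x ^ 4 = 1 / x ^ 3"
    using xp by (simp add: power4_eq_xxxx power3_eq_cube)
  ultimately show ?thesis by (simp add: x_def y_def)
qed

lemma sum_powr_quarter_le: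
  "(\<Sum>a\<in>{1..n}. real a powr (1/4) / real a) \<le> 4 * real n powr (1/4)"
proof (induction n)
  case (Suc n)
  then show ?case using powr_quarter_increment[of n] by simp
qed simp

text \<open>Any bound \<open>o(n\<^sup>1\<^sup>/\<^sup>2)\<close> would do: it makes the summands of \<open>MMV\<close> and \<open>CMMV\<close> \<open>O(n\<^sup>-\<^sup>3\<^sup>/\<^sup>2)\<close>.\<close>

lemma Mst_le_powr_quarter:
  assumes "\<forall>e\<in>set es. \<bar>e\<bar> \<le> 1" "\<forall>k\<in>set ks. 1 \<le> k" "1 \<le> n"
  shows "Mst n ks es \<le> 8 ^ length ks * real n powr (1/4)"
proof -
  have base: "1 \<le> (8::real) ^ L * real n powr (1/4)" if "1 \<le> n" for L n :: nat
    using that mult_mono[of 1 "(8::real) ^ L" 1 "real n powr (1/4)"] by (simp add: ge_one_powr_ge_zero)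
  show ?thesis
    using assms
  proof (induction n ks es rule: Mst.induct)
    case (1 n k ks e es)
    let ?C = "8 ^ length ks :: real"
    have term_le: "(1 + e * (-1) ^ a) / real a ^ k * Mst a ks es \<le> 2 * ?C * (real a powr (1/4) / real a)"
      if "a \<in> {1..n}" for a
    proof -
      have "real a ^ 1 \<le> real a ^ k"
        using that "1.prems" by (intro power_increasing) auto
      then have "(1 + e * (-1) ^ a) / real a ^ k * Mst a ks es \<le> 2 / real a * Mst a ks es"
        using that "1.prems" sign_weight_bounds[of e a]
        by (intro mult_right_mono frac_le Mst_nonneg) auto
      also have "\<dots> \<le> 2 / real a * (?C * real a powr (1/4))"
        using that "1.prems" "1.IH" by (intro mult_left_mono) auto
      finally show ?thesis by simp
    qed
    have "Mst n (k#ks) (e#es) \<le> (\<Sum>a\<in>{1..n}. 2 * ?C * (real a powr (1/4) / real a))"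
      unfolding Mst.simps using term_le by (rule sum_mono)
    also have "\<dots> \<le> 2 * ?C * (4 * real n powr (1/4))"
      by (simp only: sum_distrib_left[symmetric]) (intro mult_left_mono sum_powr_quarter_le, simp)
    finally show ?case by simp
  qed (simp only: Mst.simps, rule base, simp)+
qed

lemma Mtr_Mst_growth:
  assumes "\<forall>e\<in>set es. \<bar>e\<bar> \<le> 1" "\<forall>e\<in>set fs. \<bar>e\<bar> \<le> 1"
    "\<forall>k\<in>set ks. 1 \<le> k" "\<forall>l\<in>set ls. 1 \<le> l" "1 \<le> a"
  shows "Mtr (a - 1) ks es * Mst a ls fs \<le> 8 ^ (length ks + length ls) * real a powr (1/2)"
proof -
  have "Mtr (a - 1) ks es \<le> 8 ^ length ks * real a powr (1/4)"
    using Mtr_pred_le_Mst[OF assms(1)] Mst_le_powr_quarter[OF assms(1,3,5)] by (rule order_trans)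
  moreover have "Mst a ls fs \<le> 8 ^ length ls * real a powr (1/4)"
    using assms(2,4,5) by (rule Mst_le_powr_quarter)
  ultimately have "Mtr (a - 1) ks es * Mst a ls fs \<le> (8 ^ length ks * real a powr (1/4)) * (8 ^ length ls * real a powr (1/4))"
    using Mtr_nonneg[OF assms(1)] Mst_nonneg[OF assms(2)] by (intro mult_mono) simp_all
  also have "\<dots> = 8 ^ (length ks + length ls) * (real a powr (1/4) * real a powr (1/4))"
    by (simp only: power_add mult_ac)
  also have "real a powr (1/4) * real a powr (1/4) = real a powr (1/2)"
    by (simp flip: powr_add)
  finally show ?thesis .
qed

lemma weighted_term_le:
  fixes W M C :: real
  assumes "1 \<le> a" "2 \<le> d" "0 \<le> W" "W \<le> 2" "0 \<le> M" "M \<le> C * real a powr (1/2)"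
  shows "W * M / real a ^ d \<le> 2 * C * real a powr (-3/2)"
proof -
  have a1: "1 \<le> real a" using assms by simp
  have "real a ^ 2 \<le> real a ^ d" using a1 assms by (intro power_increasing) auto
  then have "W * M / real a ^ d \<le> 2 * M / real a ^ 2"
    using assms a1 by (intro frac_le mult_mono) auto
  also have "\<dots> \<le> 2 * (C * real a powr (1/2)) / real a ^ 2"
    using assms by (intro divide_right_mono mult_left_mono) auto
  also have "\<dots> = 2 * C * (real a powr (1/2) / real a ^ 2)"
    by simp
  also have "real a ^ 2 = real a powr (real 2)"
    using a1 by (subst powr_realpow) auto
  also have "real a powr (1/2) / real a powr (real 2) = real a powr (1/2 - real 2)"
    by (rule powr_diff [symmetric])
  also have "(1/2 - real 2) = -3/2"
    by simp
  finally show ?thesis .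
qed

lemma partial_sums_tendsto_suminf:
  fixes t :: "nat \<Rightarrow> real"
  assumes "\<And>a. 1 \<le> a \<Longrightarrow> 0 \<le> t a" "\<And>a. 1 \<le> a \<Longrightarrow> t a \<le> C * real a powr (-3/2)"
  shows "(\<lambda>N. \<Sum>a\<in>{1..N}. t a) \<longlonglongrightarrow> (\<Sum>i. t (Suc i))"
proof -
  have "summable (\<lambda>n. C * real n powr (-3/2))"
    by (intro summable_mult) (simp add: summable_real_powr_iff)
  then have majorant: "summable (\<lambda>i. C * real (Suc i) powr (-3/2))"
    by (subst summable_Suc_iff)
  have "norm (t (Suc i)) \<le> C * real (Suc i) powr (-3/2)" for i
    using assms(1)[of "Suc i"] assms(2)[of "Suc i"] by simp
  then have "summable (\<lambda>i. t (Suc i))"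
    by (intro summable_comparison_test[OF _ majorant]) simp
  then have "(\<lambda>N. \<Sum>i<N. t (Suc i)) \<longlonglongrightarrow> (\<Sum>i. t (Suc i))"
    by (rule summable_LIMSEQ)
  then show ?thesis
    by (simp add: sum.atLeast1_atMost_eq)
qed

lemma Mtr_tendsto_MMV:
  assumes "ks \<noteq> []" "es \<noteq> []" "2 \<le> hd ks" "\<forall>k\<in>set ks. 1 \<le> k" "\<forall>e\<in>set es. \<bar>e\<bar> \<le> 1"
  shows "(\<lambda>N. Mtr N ks es) \<longlonglongrightarrow> MMV ks es"
proof -
  obtain k ks' e es' where ks: "ks = k # ks'" and es: "es = e # es'"
    using assms(1,2) by (meson list.exhaust)
  define t where "t a = (1 + e * (-1) ^ a) / real a ^ k * Mtr (a - 1) ks' es'" for a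
  have "(\<lambda>N. \<Sum>a\<in>{1..N}. t a) \<longlonglongrightarrow> (\<Sum>i. t (Suc i))"
  proof (rule partial_sums_tendsto_suminf)
    fix a :: nat
    assume a: "1 \<le> a"
    have W: "0 \<le> 1 + e * (-1) ^ a" "1 + e * (-1) ^ a \<le> 2"
      using assms(5) es sign_weight_bounds[of e a] by simp_all
    have M: "0 \<le> Mtr (a - 1) ks' es'"
      using assms(5) es by (intro Mtr_nonneg) simp
    have growth: "Mtr (a - 1) ks' es' \<le> 8 ^ length ks' * real a powr (1/2)"
      using Mtr_Mst_growth[of es' "[]" ks' "[]" a] assms(4,5) ks es a by simp
    show "0 \<le> t a"
      unfolding t_def using W M by simp
    have "t a = (1 + e * (-1) ^ a) * Mtr (a - 1) ks' es' / real a ^ k"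
      by (simp add: t_def)
    also have "\<dots> \<le> 2 * 8 ^ length ks' * real a powr (-3/2)"
      using assms(3) ks by (intro weighted_term_le[OF a _ W M growth]) simp
    finally show "t a \<le> 2 * 8 ^ length ks' * real a powr (-3/2)" .
  qed
  moreover have "Mtr N ks es = (\<Sum>a\<in>{1..N}. t a)" for N
    by (simp add: ks es t_def)
  ultimately have "(\<lambda>N. Mtr N ks es) \<longlonglongrightarrow> (\<Sum>i. t (Suc i))"
    by simp
  then show ?thesis
    unfolding MMV_def using limI by metis
qed

definition CMMV_summand :: "nat list \<Rightarrow> real list \<Rightarrow> nat list \<Rightarrow> real list \<Rightarrow> nat \<Rightarrow> real" where
  "CMMV_summand ks es ls fs n =
     Mtr (n - 1) (tl ks) (tl es) * Mst n (tl ls) (tl fs) / real n ^ (hd ks + hd ls)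
     * ((1 + hd fs * (-1) ^ n) * (1 + hd es * (-1) ^ n) / 2)"

lemma CMMV_eq_suminf: "CMMV ks es ls fs = (\<Sum>i. CMMV_summand ks es ls fs (Suc i))"
  by (simp add: CMMV_def CMMV_summand_def Let_def)

lemma CMMV_partial_sums_tendsto:
  assumes "es \<noteq> []" "fs \<noteq> []" "2 \<le> hd ks + hd ls"
    "\<forall>k\<in>set (tl ks). 1 \<le> k" "\<forall>l\<in>set (tl ls). 1 \<le> l"
    "\<forall>e\<in>set es. \<bar>e\<bar> \<le> 1" "\<forall>f\<in>set fs. \<bar>f\<bar> \<le> 1"
  shows "(\<lambda>N. \<Sum>n\<in>{1..N}. CMMV_summand ks es ls fs n) \<longlonglongrightarrow> CMMV ks es ls fs"
  unfolding CMMV_eq_suminf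
proof (rule partial_sums_tendsto_suminf)
  fix a :: nat
  assume a: "1 \<le> a"
  let ?W = "(1 + hd fs * (-1) ^ a) * (1 + hd es * (-1) ^ a) / 2"
  let ?M = "Mtr (a - 1) (tl ks) (tl es) * Mst a (tl ls) (tl fs)"
  have es: "\<bar>hd es\<bar> \<le> 1" "\<forall>e\<in>set (tl es). \<bar>e\<bar> \<le> 1"
    using assms(1,6) by (cases es; simp)+
  have fs: "\<bar>hd fs\<bar> \<le> 1" "\<forall>f\<in>set (tl fs). \<bar>f\<bar> \<le> 1"
    using assms(2,7) by (cases fs; simp)+
  have "0 \<le> (1 + hd fs * (-1) ^ a) * (1 + hd es * (-1) ^ a)"
    using sign_weight_bounds[OF es(1), of a] sign_weight_bounds[OF fs(1), of a] by simp
  moreover have "(1 + hd fs * (-1) ^ a) * (1 + hd es * (-1) ^ a) \<le> 2 * 2"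
    using sign_weight_bounds[OF es(1), of a] sign_weight_bounds[OF fs(1), of a] by (intro mult_mono) simp_all
  ultimately have W: "0 \<le> ?W" "?W \<le> 2"
    by simp_all
  have M: "0 \<le> ?M"
    using es fs by (intro mult_nonneg_nonneg Mtr_nonneg Mst_nonneg) simp_all
  have growth: "?M \<le> 8 ^ (length (tl ks) + length (tl ls)) * real a powr (1/2)"
    using assms(4,5) es(2) fs(2) a by (intro Mtr_Mst_growth)
  have summand: "CMMV_summand ks es ls fs a = ?W * ?M / real a ^ (hd ks + hd ls)"
    by (simp add: CMMV_summand_def mult_ac)
  show "0 \<le> CMMV_summand ks es ls fs a"
    unfolding summand using W M by simp
  show "CMMV_summand ks es ls fs a \<le> 2 * 8 ^ (length (tl ks) + length (tl ls)) * real a powr (-3/2)"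
    unfolding summand using a assms(3) W M growth by (rule weighted_term_le)
qed

definition signs :: "real list \<Rightarrow> bool" where
  "signs xs \<longleftrightarrow> (\<forall>x\<in>set xs. x = 1 \<or> x = -1)"

lemma length_pvec [simp]: "length (pvec xs) = length xs"
  by (simp add: pvec_def)

lemma length_rvec [simp]: "length (rvec xs) = length xs"
  by (simp add: rvec_def)

lemma nth_pvec: "i < length xs \<Longrightarrow> pvec xs ! i = prod_list (drop i xs)"
  by (simp add: pvec_def)

lemma nth_rvec: "i < length xs \<Longrightarrow> rvec xs ! i = prod_list (take (Suc i) xs)"
  by (simp add: rvec_def)

lemma pvec_Cons: "pvec (x # xs) = prod_list (x # xs) # pvec xs"
  by (rule nth_equalityI) (auto simp: nth_pvec nth_Cons split: nat.split)

lemma pvec_eq_Nil_iff [simp]: "pvec xs = [] \<longleftrightarrow> xs = []"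
  by (metis length_0_conv length_pvec)

lemma hd_pvec: "xs \<noteq> [] \<Longrightarrow> hd (pvec xs) = prod_list xs"
  by (cases xs) (auto simp: pvec_Cons)

lemma signs_prod_list: "signs xs \<Longrightarrow> prod_list xs = 1 \<or> prod_list xs = -1"
  by (induction xs) (auto simp: signs_def)

lemma signs_abs_le: "signs xs \<Longrightarrow> \<forall>x\<in>set xs. \<bar>x\<bar> \<le> 1"
  by (auto simp: signs_def)

lemma signs_take: "signs xs \<Longrightarrow> signs (take i xs)"
  by (auto simp: signs_def dest: in_set_takeD)

lemma signs_drop: "signs xs \<Longrightarrow> signs (drop i xs)"
  by (auto simp: signs_def dest: in_set_dropD)

lemma signs_pvec: "signs xs \<Longrightarrow> signs (pvec xs)"
  unfolding signs_def[of "pvec xs"] by (auto simp: pvec_def intro!: signs_prod_list signs_drop)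

lemma signs_rvec: "signs xs \<Longrightarrow> signs (rvec xs)"
  unfolding signs_def[of "rvec xs"] by (auto simp: rvec_def intro!: signs_prod_list signs_take)

lemma signs_qvec: "signs xs \<Longrightarrow> signs (qvec xs)"
  using signs_rvec by (simp add: qvec_def signs_def)

lemma signs_scale: "signs xs \<Longrightarrow> c = 1 \<or> c = -1 \<Longrightarrow> signs (map (\<lambda>x. c * x) xs)"
  by (auto simp: signs_def)

lemma signs_uminus: "signs xs \<Longrightarrow> signs (map uminus xs)"
  by (auto simp: signs_def)

lemma signs_append: "signs xs \<Longrightarrow> signs ys \<Longrightarrow> signs (xs @ ys)"
  by (auto simp: signs_def)

lemma signs_singleton [simp]: "signs [1]" "signs [-1]"
  by (auto simp: signs_def)

lemma drop_rvec:
  assumes "j < length xs"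
  shows "drop j (rvec xs) = map (\<lambda>x. prod_list (take (Suc j) xs) * x) (1 # rvec (drop (Suc j) xs))"
proof (rule nth_equalityI)
  fix i
  assume i: "i < length (drop j (rvec xs))"
  show "drop j (rvec xs) ! i = map (\<lambda>x. prod_list (take (Suc j) xs) * x) (1 # rvec (drop (Suc j) xs)) ! i"
  proof (cases i)
    case (Suc i')
    have "take (Suc j + Suc i') xs = take (Suc j) xs @ take (Suc i') (drop (Suc j) xs)"
      by (rule take_add)
    then have "prod_list (take (Suc (j + Suc i')) xs) =
        prod_list (take (Suc j) xs) * prod_list (take (Suc i') (drop (Suc j) xs))"
      by simp
    then show ?thesis using i assms Suc by (simp add: nth_rvec)
  qed (use i assms in \<open>simp add: nth_rvec\<close>)
qed (use assms in simp)

text \<open>The prefix products of \<open>xs\<close> up to position \<open>j\<close> are the suffix products of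
  \<open>take (Suc j) xs\<close> times the full product, because signs square to \<open>1\<close>.\<close>

lemma take_rvec:
  assumes "j < length xs" "signs xs"
  shows "take j (rvec xs) = map (\<lambda>x. prod_list (take (Suc j) xs) * x) (tl (pvec (take (Suc j) xs)))"
proof (rule nth_equalityI)
  fix i
  assume "i < length (take j (rvec xs))"
  then have ij: "i < j" by simp
  define A where "A = prod_list (take (Suc i) xs)"
  define D where "D = prod_list (drop (Suc i) (take (Suc j) xs))"
  have "take (Suc j) xs = take (Suc i) xs @ drop (Suc i) (take (Suc j) xs)"
    using ij by (metis append_take_drop_id min.absorb1 less_imp_le_nat Suc_le_mono take_take)
  then have prod: "prod_list (take (Suc j) xs) = A * D"
    unfolding A_def D_def by (metis prod_list.append)
  have "D * D = 1"
    using signs_prod_list[OF signs_drop[OF signs_take[OF assms(2)]], of "Suc i" "Suc j"]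
    unfolding D_def by auto
  then have "A = prod_list (take (Suc j) xs) * D"
    unfolding prod by (simp add: mult.assoc)
  moreover have "tl (pvec (take (Suc j) xs)) ! i = D"
    using ij assms(1) by (simp add: nth_tl nth_pvec D_def)
  ultimately show "take j (rvec xs) ! i = map (\<lambda>x. prod_list (take (Suc j) xs) * x) (tl (pvec (take (Suc j) xs))) ! i"
    using ij assms(1) by (simp add: nth_rvec A_def)
qed (use assms in simp)

text \<open>For signs \<open>s, h, P\<close> the weight \<open>(1 + P s)(1 + h s)/2\<close> is \<open>1 + h s\<close> when \<open>P = h\<close> and vanishes
  when \<open>P = -h\<close>; so the two terms on the right select \<open>F\<close> at the sign \<open>c = h P\<close>.\<close>

lemma sign_split:
  fixes s h c P :: real
  assumes "s = 1 \<or> s = -1" "h = 1 \<or> h = -1" "c = 1 \<or> c = -1" "c = h * P"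
  shows "(1 + h * s) * F c =
    F 1 * ((1 + P * s) * (1 + h * s) / 2) + F (-1) * ((1 + (-P) * s) * (1 + h * s) / 2)"
proof -
  have "P = c * h" using assms(2,4) by auto
  then show ?thesis using assms(1-3) by (elim disjE) simp_all
qed

lemma scaled_rvec_term_split:
  assumes "signs xs" "h = 1 \<or> h = -1" "j < length xs"
  defines "\<sigma> \<equiv> map (\<lambda>x. h * x) (rvec xs)" and "\<pi> \<equiv> pvec (take (Suc j) xs)"
  shows "(1 + h * (-1) ^ b) * (Mtr N ms (rev (drop j \<sigma>)) * Mst b ls (take j \<sigma>)) =
      Mtr N ms (qvec (drop (Suc j) xs) @ [1]) * Mst b ls (tl \<pi>)
        * ((1 + hd \<pi> * (-1) ^ b) * (1 + h * (-1) ^ b) / 2)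
    + Mtr N ms (map uminus (qvec (drop (Suc j) xs)) @ [-1]) * Mst b ls (tl (map uminus \<pi>))
        * ((1 + hd (map uminus \<pi>) * (-1) ^ b) * (1 + h * (-1) ^ b) / 2)"
proof -
  define P where "P = prod_list (take (Suc j) xs)"
  define F where "F c = Mtr N ms (map (\<lambda>x. c * x) (qvec (drop (Suc j) xs) @ [1]))
      * Mst b ls (map (\<lambda>x. c * x) (tl \<pi>))" for c :: real
  have P: "P = 1 \<or> P = -1"
    unfolding P_def using assms(1) by (intro signs_prod_list signs_take)
  have "\<pi> \<noteq> []"
    using assms(3) by (auto simp: \<pi>_def)
  have hd_\<pi>: "hd \<pi> = P"
    using assms(3) unfolding \<pi>_def P_def by (subst hd_pvec) auto
  then have hd_minus_\<pi>: "hd (map uminus \<pi>) = - P"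
    using \<open>\<pi> \<noteq> []\<close> by (simp add: hd_map)
  have "rev (drop j \<sigma>) = map (\<lambda>x. (h * P) * x) (qvec (drop (Suc j) xs) @ [1])"
    using assms(3) by (simp add: \<sigma>_def drop_map drop_rvec qvec_def rev_map P_def mult.assoc)
  moreover have "take j \<sigma> = map (\<lambda>x. (h * P) * x) (tl \<pi>)"
    using assms(1,3) by (simp add: \<sigma>_def take_map take_rvec \<pi>_def P_def mult.assoc)
  ultimately have "Mtr N ms (rev (drop j \<sigma>)) * Mst b ls (take j \<sigma>) = F (h * P)"
    by (simp add: F_def)
  moreover have "(1 + h * (-1) ^ b) * F (h * P) =
      F 1 * ((1 + P * (-1) ^ b) * (1 + h * (-1) ^ b) / 2) + F (-1) * ((1 + (-P) * (-1) ^ b) * (1 + h * (-1) ^ b) / 2)"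
    using assms(2) P by (intro sign_split) (auto simp: minus_one_power_iff)
  moreover have "F 1 = Mtr N ms (qvec (drop (Suc j) xs) @ [1]) * Mst b ls (tl \<pi>)"
    by (simp add: F_def)
  moreover have "F (-1) = Mtr N ms (map uminus (qvec (drop (Suc j) xs)) @ [-1]) * Mst b ls (tl (map uminus \<pi>))"
    by (simp add: F_def map_tl)
  ultimately show ?thesis
    by (simp only: hd_\<pi> hd_minus_\<pi>)
qed

lemma Mtr_truncated_identity:
  assumes "eta \<noteq> []" "signs eta" "signs eps" "length eps = length m"
  shows "Mtr N (rev m @ (hd k + 1) # tl k) (map (\<lambda>x. prod_list eta * x) (qvec eps) @ pvec eta)
       = (\<Sum>j\<in>{1..length m}. (-1) ^ (j - 1) *
            Mtr N (rev (drop (j - 1) m)) (qvec (drop j eps) @ [1]) *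
            (\<Sum>n\<in>{1..N}. CMMV_summand k (pvec eta) (1 # take (j - 1) m) (pvec (take j eps)) n))
       + (\<Sum>j\<in>{1..length m}. (-1) ^ (j - 1) *
            Mtr N (rev (drop (j - 1) m)) (map uminus (qvec (drop j eps)) @ [-1]) *
            (\<Sum>n\<in>{1..N}. CMMV_summand k (pvec eta) (1 # take (j - 1) m) (map uminus (pvec (take j eps))) n))
       + 2 * (-1) ^ length m *
            (\<Sum>n\<in>{1..N}. CMMV_summand k (pvec eta) (1 # m) (0 # map (\<lambda>x. prod_list eta * x) (rvec eps)) n)"
proof -
  define h where "h = prod_list eta"
  define \<sigma> where "\<sigma> = map (\<lambda>x. h * x) (rvec eps)"
  define p where "p = length m"
  define G where "G b = (1 + h * (-1) ^ b) / real b ^ (hd k + 1) * Mtr (b - 1) (tl k) (tl (pvec eta))" for b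
  define Xp where "Xp j = Mtr N (rev (drop j m)) (qvec (drop (Suc j) eps) @ [1])" for j
  define Xm where "Xm j = Mtr N (rev (drop j m)) (map uminus (qvec (drop (Suc j) eps)) @ [-1])" for j
  define Cp where "Cp j = CMMV_summand k (pvec eta) (1 # take j m) (pvec (take (Suc j) eps))" for j
  define Cm where "Cm j = CMMV_summand k (pvec eta) (1 # take j m) (map uminus (pvec (take (Suc j) eps)))" for j
  define C0 where "C0 = CMMV_summand k (pvec eta) (1 # m) (0 # \<sigma>)"
  have h: "h = 1 \<or> h = -1"
    unfolding h_def using assms(2) by (rule signs_prod_list)
  have pvec_eta: "pvec eta = h # tl (pvec eta)"
    using assms(1) by (cases eta) (simp_all add: pvec_Cons h_def)
  then have hd_pvec_eta: "hd (pvec eta) = h"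
    by (metis list.sel(1))
  have term_j: "G b * (Mtr N (rev (drop j m)) (rev (drop j \<sigma>)) * Mst b (take j m) (take j \<sigma>))
      = Xp j * Cp j b + Xm j * Cm j b" if "j < p" for j b
  proof -
    have "G b * (Mtr N (rev (drop j m)) (rev (drop j \<sigma>)) * Mst b (take j m) (take j \<sigma>))
        = Mtr (b - 1) (tl k) (tl (pvec eta)) / real b ^ (hd k + 1)
          * ((1 + h * (-1) ^ b) * (Mtr N (rev (drop j m)) (rev (drop j \<sigma>)) * Mst b (take j m) (take j \<sigma>)))"
      by (simp add: G_def)
    also have "(1 + h * (-1) ^ b) * (Mtr N (rev (drop j m)) (rev (drop j \<sigma>)) * Mst b (take j m) (take j \<sigma>))
        = Xp j * Mst b (take j m) (tl (pvec (take (Suc j) eps)))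
            * ((1 + hd (pvec (take (Suc j) eps)) * (-1) ^ b) * (1 + h * (-1) ^ b) / 2)
        + Xm j * Mst b (take j m) (tl (map uminus (pvec (take (Suc j) eps))))
            * ((1 + hd (map uminus (pvec (take (Suc j) eps))) * (-1) ^ b) * (1 + h * (-1) ^ b) / 2)"
      unfolding \<sigma>_def Xp_def Xm_def using that assms(4)
      by (intro scaled_rvec_term_split[OF assms(3) h]) (simp add: p_def)
    also have "Mtr (b - 1) (tl k) (tl (pvec eta)) / real b ^ (hd k + 1) * \<dots> = Xp j * Cp j b + Xm j * Cm j b"
      unfolding Cp_def Cm_def CMMV_summand_def hd_pvec_eta list.sel divide_inverse by algebra
    finally show ?thesis .
  qed
  have term_last: "G b * Mst b m \<sigma> = 2 * C0 b" for b
    using hd_pvec_eta by (simp add: G_def C0_def CMMV_summand_def)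
  have "map (\<lambda>x. prod_list eta * x) (qvec eps) @ pvec eta = rev \<sigma> @ h # tl (pvec eta)"
    by (subst pvec_eta) (simp add: \<sigma>_def h_def qvec_def rev_map)
  then have "Mtr N (rev m @ (hd k + 1) # tl k) (map (\<lambda>x. prod_list eta * x) (qvec eps) @ pvec eta)
      = (\<Sum>b\<in>{1..N}. G b * ((\<Sum>j<p. (-1) ^ j * Mtr N (rev (drop j m)) (rev (drop j \<sigma>)) * Mst b (take j m) (take j \<sigma>))
          + (-1) ^ p * Mst b m \<sigma>))"
    using assms(4) by (simp add: Mtr_append_expand \<sigma>_def p_def G_def)
  also have "\<dots> = (\<Sum>b\<in>{1..N}. (\<Sum>j<p. (-1) ^ j * (Xp j * Cp j b + Xm j * Cm j b)) + (-1) ^ p * (2 * C0 b))"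
  proof (rule sum.cong[OF refl])
    fix b
    have "G b * ((\<Sum>j<p. (-1) ^ j * Mtr N (rev (drop j m)) (rev (drop j \<sigma>)) * Mst b (take j m) (take j \<sigma>))
          + (-1) ^ p * Mst b m \<sigma>)
        = (\<Sum>j<p. (-1) ^ j * (G b * (Mtr N (rev (drop j m)) (rev (drop j \<sigma>)) * Mst b (take j m) (take j \<sigma>))))
          + (-1) ^ p * (G b * Mst b m \<sigma>)"
      by (simp add: distrib_left sum_distrib_left mult_ac)
    also have "\<dots> = (\<Sum>j<p. (-1) ^ j * (Xp j * Cp j b + Xm j * Cm j b)) + (-1) ^ p * (2 * C0 b)"
      using term_j term_last by (intro arg_cong2[where f = "(+)"] sum.cong) simp_all
    finally show "G b * ((\<Sum>j<p. (-1) ^ j * Mtr N (rev (drop j m)) (rev (drop j \<sigma>)) * Mst b (take j m) (take j \<sigma>))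
          + (-1) ^ p * Mst b m \<sigma>)
        = (\<Sum>j<p. (-1) ^ j * (Xp j * Cp j b + Xm j * Cm j b)) + (-1) ^ p * (2 * C0 b)" .
  qed
  also have "\<dots> = (\<Sum>j<p. (-1) ^ j * Xp j * (\<Sum>b\<in>{1..N}. Cp j b))
      + (\<Sum>j<p. (-1) ^ j * Xm j * (\<Sum>b\<in>{1..N}. Cm j b)) + 2 * (-1) ^ p * (\<Sum>b\<in>{1..N}. C0 b)"
    by (simp add: sum.distrib sum_distrib_left sum.swap[of _ "{Suc 0..N}"] distrib_left mult_ac)
  finally show ?thesis
    by (simp add: sum.atLeast1_atMost_eq p_def Xp_def Xm_def Cp_def Cm_def C0_def \<sigma>_def h_def)
qed

theorem mainTheorem11:
  fixes k m :: "nat list" and eta eps :: "real list"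
  assumes "k \<noteq> []" and "m \<noteq> []"
    and "\<forall>x\<in>set k. x \<ge> 1" and "\<forall>x\<in>set m. x \<ge> 1"
    and "last m \<ge> 2"
    and "length eta = length k" and "length eps = length m"
    and "\<forall>x\<in>set eta. x = 1 \<or> x = -1" and "\<forall>x\<in>set eps. x = 1 \<or> x = -1"
  shows "MMV (rev m @ (hd k + 1) # tl k)
             (map (\<lambda>x. prod_list eta * x) (qvec eps) @ pvec eta)
       = (\<Sum>j\<in>{1..length m}. (-1) ^ (j - 1) *
            MMV (rev (drop (j - 1) m)) (qvec (drop j eps) @ [1]) *
            CMMV k (pvec eta) (1 # take (j - 1) m) (pvec (take j eps)))
       + (\<Sum>j\<in>{1..length m}. (-1) ^ (j - 1) *
            MMV (rev (drop (j - 1) m)) (map uminus (qvec (drop j eps)) @ [-1]) *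
            CMMV k (pvec eta) (1 # take (j - 1) m) (map uminus (pvec (take j eps))))
       + 2 * (-1) ^ length m *
            CMMV k (pvec eta) (1 # m) (0 # map (\<lambda>x. prod_list eta * x) (rvec eps))"
proof -
  have "eta \<noteq> []" using assms(1,6) by auto
  have signs: "signs eta" "signs eps"
    using assms(8,9) by (simp_all add: signs_def)
  have k: "1 \<le> hd k" "\<forall>x\<in>set (tl k). 1 \<le> x"
    using assms(1,3) by (cases k; simp)+
  have m: "rev (drop (j - 1) m) \<noteq> [] \<and> 2 \<le> hd (rev (drop (j - 1) m)) \<and>
      (\<forall>x\<in>set (drop (j - 1) m). 1 \<le> x) \<and> (\<forall>x\<in>set (take (j - 1) m). 1 \<le> x)"
    if "j \<in> {1..length m}" for j
    using that assms(4,5) by (auto simp: hd_rev dest: in_set_dropD in_set_takeD)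
  have lim_lhs: "(\<lambda>N. Mtr N (rev m @ (hd k + 1) # tl k) (map (\<lambda>x. prod_list eta * x) (qvec eps) @ pvec eta))
      \<longlonglongrightarrow> MMV (rev m @ (hd k + 1) # tl k) (map (\<lambda>x. prod_list eta * x) (qvec eps) @ pvec eta)"
    using assms(2,4,5) k \<open>eta \<noteq> []\<close> signs
    by (intro Mtr_tendsto_MMV signs_abs_le signs_append signs_scale signs_qvec signs_pvec signs_prod_list)
      (auto simp: hd_append hd_rev)
  have lim_j:
    "(\<lambda>N. Mtr N (rev (drop (j - 1) m)) (qvec (drop j eps) @ [1]))
      \<longlonglongrightarrow> MMV (rev (drop (j - 1) m)) (qvec (drop j eps) @ [1])"
    "(\<lambda>N. Mtr N (rev (drop (j - 1) m)) (map uminus (qvec (drop j eps)) @ [-1]))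
      \<longlonglongrightarrow> MMV (rev (drop (j - 1) m)) (map uminus (qvec (drop j eps)) @ [-1])"
    "(\<lambda>N. \<Sum>n\<in>{1..N}. CMMV_summand k (pvec eta) (1 # take (j - 1) m) (pvec (take j eps)) n)
      \<longlonglongrightarrow> CMMV k (pvec eta) (1 # take (j - 1) m) (pvec (take j eps))"
    "(\<lambda>N. \<Sum>n\<in>{1..N}. CMMV_summand k (pvec eta) (1 # take (j - 1) m) (map uminus (pvec (take j eps))) n)
      \<longlonglongrightarrow> CMMV k (pvec eta) (1 # take (j - 1) m) (map uminus (pvec (take j eps)))"
    if "j \<in> {1..length m}" for j
    using m[OF that] that assms(7) k \<open>eta \<noteq> []\<close> signs
    by (intro Mtr_tendsto_MMV CMMV_partial_sums_tendsto signs_abs_le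
        signs_append signs_uminus signs_qvec signs_pvec signs_take signs_drop; auto)+
  have lim_last: "(\<lambda>N. \<Sum>n\<in>{1..N}. CMMV_summand k (pvec eta) (1 # m) (0 # map (\<lambda>x. prod_list eta * x) (rvec eps)) n)
      \<longlonglongrightarrow> CMMV k (pvec eta) (1 # m) (0 # map (\<lambda>x. prod_list eta * x) (rvec eps))"
    using assms(4) k \<open>eta \<noteq> []\<close> signs_abs_le[OF signs_pvec[OF signs(1)]]
      signs_abs_le[OF signs_scale[OF signs_rvec[OF signs(2)] signs_prod_list[OF signs(1)]]]
    by (intro CMMV_partial_sums_tendsto) auto
  show ?thesis
    by (rule LIMSEQ_unique[OF lim_lhs], unfold Mtr_truncated_identity[OF \<open>eta \<noteq> []\<close> signs assms(7)],
        intro tendsto_intros lim_j lim_last)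
qed

end
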